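(* Let $\alpha=(a_1,a_2,\dots,a_w)$ and $\alpha^-=(a_2,\dots,a_w)$. Let $a_i$ with $i\ge2$ lie in $\mathbb{L}^t_\alpha$. Then: (1) if $un^{t-1}_\alpha(a_i)=a_1$, then $RL_{\alpha^-}(a_i)=RL_\alpha(a_i)-1$; (2) if $un^{t-1}_\alpha(a_i)\ne a_1$, then $RL_{\alpha^-}(a_i)=RL_\alpha(a_i)$.
   Context: Sequences consist of real numbers. Items are identified with their original positions, and items of $\alpha^-$ keep their indices from $\alpha$. Increasing subsequences are non-strict: indices strictly increase and values satisfy $\le$. For a sequence $\gamma$, $RL_\gamma(a)$ is the maximum length of an increasing subsequence of $\gamma$ ending at $a$. $\mathbb{L}^t_\gamma$ is the list of items of $\gamma$ with rising length $t$, ordered by position. The up neighbor $un_\alpha(a_i)$ is the item $a_j$ with the largest $j<i$ and $RL_\alpha(a_j)=RL_\alpha(a_i)-1$. Further, $un^0_\alpha(a)=a$ and $un^k_\alpha(a)=un_\alpha(un^{k-1}_\alpha(a))$. *)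

theory Defs
  imports Main "HOL.Real"
begin

text \<open>A sequence is a function a :: nat => real restricted to a finite set S of positions.
  alpha = (a 1, ..., a w) has positions {1..w}; alpha^- has positions {2..w} (items keep
  their original indices).\<close>

definition incr_subseq :: "(nat \<Rightarrow> real) \<Rightarrow> nat set \<Rightarrow> nat list \<Rightarrow> bool" where
  "incr_subseq a S is \<longleftrightarrow> set is \<subseteq> S \<and> sorted_wrt (<) is \<and> sorted_wrt (\<lambda>i j. a i \<le> a j) is"

definition RL :: "(nat \<Rightarrow> real) \<Rightarrow> nat set \<Rightarrow> nat \<Rightarrow> nat" where
  "RL a S i = Max {length is | is. incr_subseq a S is \<and> is \<noteq> [] \<and> last is = i}"

definition un :: "(nat \<Rightarrow> real) \<Rightarrow> nat \<Rightarrow> nat \<Rightarrow> nat" where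
  "un a w i = (GREATEST j. j \<in> {1..w} \<and> j < i \<and> RL a {1..w} j + 1 = RL a {1..w} i)"

end

theory Submission
  imports Defs
begin

text \<open>Iterating the up neighbour from an item of rising length t descends through every
  level t, t-1, ..., 1, each step moving left to a smaller or equal value; so the chain
  is itself an increasing subsequence of length t ending at the item. If the chain avoids
  a_1, it survives in alpha^-, and the rising length is unchanged. If it ends at a_1, then by
  induction on the level s every item of alpha^- that has rising length s in alpha and lies
  weakly left of the chain element of level s loses one unit of rising length: an increasing
  subsequence of full length in alpha^- would end in a predecessor of level s - 1 that, by
  the maximality of the up neighbour, again lies weakly left of the chain. Deleting one item
  never costs more than one unit, which gives the exact values.\<close>

lemma incr_subseq_snoc:
  "incr_subseq a S (xs @ [i]) \<longleftrightarrow>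
     incr_subseq a S xs \<and> i \<in> S \<and> (\<forall>x\<in>set xs. x < i \<and> a x \<le> a i)"
  unfolding incr_subseq_def by (auto simp: sorted_wrt_append)

lemma finite_incr_subseq_lengths:
  assumes "finite S"
  shows "finite {length xs | xs. incr_subseq a S xs \<and> xs \<noteq> [] \<and> last xs = i}"
proof (rule finite_subset[of _ "{..card S}"])
  have "length xs \<le> card S" if "incr_subseq a S xs" for xs
  proof -
    from that have "distinct xs" "set xs \<subseteq> S"
      unfolding incr_subseq_def using strict_sorted_iff by auto
    then show ?thesis using distinct_card card_mono[OF assms] by metis
  qed
  then show "{length xs | xs. incr_subseq a S xs \<and> xs \<noteq> [] \<and> last xs = i} \<subseteq> {..card S}"
    by auto
qed simp

lemma length_less_RL:
  assumes "finite S" "incr_subseq a S (xs @ [i])"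
  shows "length xs < RL a S i"
proof -
  have "length (xs @ [i]) \<in> {length ys | ys. incr_subseq a S ys \<and> ys \<noteq> [] \<and> last ys = i}"
    using assms(2) by (intro CollectI exI[of _ "xs @ [i]"]) simp
  then have "length (xs @ [i]) \<le> RL a S i"
    unfolding RL_def using finite_incr_subseq_lengths[OF assms(1)] by (rule Max_ge[rotated])
  then show ?thesis by simp
qed

lemma RL_attained:
  assumes "finite S" "i \<in> S"
  obtains xs where "incr_subseq a S (xs @ [i])" "Suc (length xs) = RL a S i"
proof -
  have "incr_subseq a S [i]" using assms by (simp add: incr_subseq_def)
  then have "{length xs | xs. incr_subseq a S xs \<and> xs \<noteq> [] \<and> last xs = i} \<noteq> {}"
    by force
  from Max_in[OF finite_incr_subseq_lengths[OF assms(1)] this]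
  obtain ys where "incr_subseq a S ys" "ys \<noteq> []" "last ys = i" "length ys = RL a S i"
    unfolding RL_def by auto
  with that[of "butlast ys"] show ?thesis by (metis append_butlast_last_id length_append_singleton)
qed

lemma RL_pos:
  assumes "finite S" "i \<in> S"
  shows "1 \<le> RL a S i"
  using length_less_RL[OF assms(1), of a "[]" i] assms by (simp add: incr_subseq_def)

lemma RL_Suc_le:
  assumes "finite S" "j \<in> S" "i \<in> S" "j < i" "a j \<le> a i"
  shows "RL a S j + 1 \<le> RL a S i"
proof -
  obtain xs where xs: "incr_subseq a S (xs @ [j])" "Suc (length xs) = RL a S j"
    using RL_attained[OF assms(1,2)] .
  with assms(3-5) have "incr_subseq a S ((xs @ [j]) @ [i])"
    unfolding incr_subseq_snoc by force
  from length_less_RL[OF assms(1) this] xs(2) show ?thesis by simp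
qed

corollary RL_eq_imp_less:
  assumes "finite S" "j \<in> S" "i \<in> S" "j < i" "RL a S j = RL a S i"
  shows "a i < a j"
  using RL_Suc_le[OF assms(1-4), of a] assms(5) by force

lemma RL_predecessor:
  assumes "finite S" "i \<in> S" "2 \<le> RL a S i"
  obtains j where "j \<in> S" "j < i" "a j \<le> a i" "RL a S j + 1 = RL a S i"
proof -
  obtain xs where xs: "incr_subseq a S (xs @ [i])" "Suc (length xs) = RL a S i"
    using RL_attained[OF assms(1,2)] .
  with assms(3) obtain ys j where xs_eq: "xs = ys @ [j]" by (cases xs rule: rev_cases) auto
  from xs(1) xs_eq have "incr_subseq a S ((ys @ [j]) @ [i])" by simp
  then have j: "incr_subseq a S (ys @ [j])" "j < i" "a j \<le> a i"
    unfolding incr_subseq_snoc[of a S "ys @ [j]"] by auto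
  from j(1) have "j \<in> S" unfolding incr_subseq_snoc by simp
  have "RL a S i \<le> RL a S j + 1"
    using length_less_RL[OF assms(1) j(1)] xs(2) xs_eq by simp
  with RL_Suc_le[OF assms(1) \<open>j \<in> S\<close> assms(2) j(2,3)] have "RL a S j + 1 = RL a S i"
    by linarith
  with that j \<open>j \<in> S\<close> show ?thesis by blast
qed

lemma RL_mono:
  assumes "finite S" "S' \<subseteq> S" "i \<in> S'"
  shows "RL a S' i \<le> RL a S i"
proof -
  obtain xs where xs: "incr_subseq a S' (xs @ [i])" "Suc (length xs) = RL a S' i"
    using RL_attained[OF finite_subset[OF assms(2,1)] assms(3)] .
  then have "incr_subseq a S (xs @ [i])" using assms(2) unfolding incr_subseq_def by auto
  from length_less_RL[OF assms(1) this] xs(2) show ?thesis by simp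
qed

lemma RL_le_RL_remove:
  assumes "finite S" "i \<in> S" "x \<noteq> i"
  shows "RL a S i \<le> RL a (S - {x}) i + 1"
proof -
  obtain xs where xs: "incr_subseq a S (xs @ [i])" "Suc (length xs) = RL a S i"
    using RL_attained[OF assms(1,2)] .
  let ?ys = "filter (\<lambda>y. y \<noteq> x) xs"
  have "incr_subseq a (S - {x}) (?ys @ [i])"
    using xs(1) assms(3) unfolding incr_subseq_snoc
    by (auto simp: incr_subseq_def sorted_wrt_filter)
  from length_less_RL[OF _ this] assms(1) have "length ?ys < RL a (S - {x}) i" by simp
  moreover have "length xs \<le> length ?ys + 1"
  proof -
    have "distinct xs" using xs(1) unfolding incr_subseq_def by (simp add: strict_sorted_iff)
    then have "length ?ys = card (set xs - {x})"
      using distinct_card[of ?ys] by (simp add: set_diff_eq)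
    with \<open>distinct xs\<close> show ?thesis by (auto simp: card_Diff_singleton_if distinct_card)
  qed
  ultimately show ?thesis using xs(2) by simp
qed

lemma un_props:
  assumes "i \<in> {1..w}" "2 \<le> RL a {1..w} i"
  shows "un a w i \<in> {1..w}" "un a w i < i" "a (un a w i) \<le> a i"
    and "RL a {1..w} (un a w i) + 1 = RL a {1..w} i"
    and "\<And>k. k \<in> {1..w} \<Longrightarrow> k < i \<Longrightarrow> RL a {1..w} k + 1 = RL a {1..w} i \<Longrightarrow> k \<le> un a w i"
proof -
  let ?P = "\<lambda>j. j \<in> {1..w} \<and> j < i \<and> RL a {1..w} j + 1 = RL a {1..w} i"
  obtain j where j: "j \<in> {1..w}" "j < i" "a j \<le> a i" "RL a {1..w} j + 1 = RL a {1..w} i"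
    using RL_predecessor[of "{1..w}" i a] assms by auto
  have bound: "\<And>y. ?P y \<Longrightarrow> y \<le> i" by simp
  have P_un: "?P (un a w i)"
    unfolding un_def using GreatestI_nat[of ?P j i] j bound by blast
  then show "un a w i \<in> {1..w}" "un a w i < i" "RL a {1..w} (un a w i) + 1 = RL a {1..w} i"
    by auto
  show greatest: "\<And>k. k \<in> {1..w} \<Longrightarrow> k < i \<Longrightarrow> RL a {1..w} k + 1 = RL a {1..w} i \<Longrightarrow> k \<le> un a w i"
    unfolding un_def using Greatest_le_nat[of ?P _ i] bound by blast
  \<comment> \<open>Items of equal rising length strictly decrease from left to right.\<close>
  have "a (un a w i) \<le> a j"
  proof (cases "j = un a w i")
    case False
    with greatest j have "j < un a w i" by fastforce
    with RL_eq_imp_less[of "{1..w}" j "un a w i" a] j P_un show ?thesis by auto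
  qed simp
  with j show "a (un a w i) \<le> a i" by simp
qed

lemma un_iter:
  assumes "i \<in> {1..w}" "k < RL a {1..w} i"
  shows "(un a w ^^ k) i \<in> {1..w} \<and> RL a {1..w} ((un a w ^^ k) i) = RL a {1..w} i - k"
  using assms(2)
proof (induction k)
  case (Suc k)
  then have "(un a w ^^ k) i \<in> {1..w}" and level: "RL a {1..w} ((un a w ^^ k) i) = RL a {1..w} i - k"
    by simp_all
  moreover from level Suc.prems have "2 \<le> RL a {1..w} ((un a w ^^ k) i)" by simp
  ultimately have "un a w ((un a w ^^ k) i) \<in> {1..w}"
    "RL a {1..w} (un a w ((un a w ^^ k) i)) + 1 = RL a {1..w} ((un a w ^^ k) i)"
    using un_props(1,4) by blast+
  with level show ?case by simp
qed (use assms(1) in simp)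

lemma un_iter_Suc:
  assumes "i \<in> {1..w}" "Suc k < RL a {1..w} i"
  shows "(un a w ^^ Suc k) i < (un a w ^^ k) i"
    and "a ((un a w ^^ Suc k) i) \<le> a ((un a w ^^ k) i)"
    and "\<And>q. q \<in> {1..w} \<Longrightarrow> q < (un a w ^^ k) i \<Longrightarrow>
           RL a {1..w} q + 1 = RL a {1..w} ((un a w ^^ k) i) \<Longrightarrow> q \<le> (un a w ^^ Suc k) i"
proof -
  have member: "(un a w ^^ k) i \<in> {1..w}"
    and level: "RL a {1..w} ((un a w ^^ k) i) = RL a {1..w} i - k"
    using un_iter[OF assms(1) Suc_lessD[OF assms(2)]] by simp_all
  from level assms(2) have "2 \<le> RL a {1..w} ((un a w ^^ k) i)" by simp
  note un = un_props[OF member this]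
  show "(un a w ^^ Suc k) i < (un a w ^^ k) i" "a ((un a w ^^ Suc k) i) \<le> a ((un a w ^^ k) i)"
    using un(2,3) by simp_all
  show "\<And>q. q \<in> {1..w} \<Longrightarrow> q < (un a w ^^ k) i \<Longrightarrow>
          RL a {1..w} q + 1 = RL a {1..w} ((un a w ^^ k) i) \<Longrightarrow> q \<le> (un a w ^^ Suc k) i"
    using un(5) by simp
qed

lemma RL_tail_ge_if_chain_avoids_first:
  assumes i: "i \<in> {1..w}" and t: "RL a {1..w} i = t" and end_ne: "(un a w ^^ (t - 1)) i \<noteq> 1"
  shows "t \<le> RL a {2..w} i"
proof -
  define c where "c k = (un a w ^^ k) i" for k
  have "c k \<in> {2..w} \<and> t - k \<le> RL a {2..w} (c k)" if "k \<le> t - 1" for k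
    using that
  proof (induction k rule: inc_induct)
    case base
    have "t - 1 < RL a {1..w} i" using RL_pos[of "{1..w}" i a] i t by simp
    from un_iter[OF i this] end_ne have "c (t - 1) \<in> {2..w}" by (auto simp: c_def)
    then show ?case using RL_pos[of "{2..w}" "c (t - 1)" a] by auto
  next
    case (step k)
    have Suc_k: "Suc k < RL a {1..w} i" using step.hyps(2) t by simp
    have "c (Suc k) < c k" "a (c (Suc k)) \<le> a (c k)"
      using un_iter_Suc(1,2)[OF i Suc_k] c_def by simp_all
    moreover have "c k \<in> {2..w}"
      using un_iter[OF i Suc_lessD[OF Suc_k]] c_def step.IH \<open>c (Suc k) < c k\<close> by auto
    ultimately have "RL a {2..w} (c (Suc k)) + 1 \<le> RL a {2..w} (c k)"
      using RL_Suc_le[of "{2..w}" "c (Suc k)" "c k" a] step.IH by auto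
    with step.IH \<open>c k \<in> {2..w}\<close> show ?case by auto
  qed
  from this[of 0] show ?thesis by (simp add: c_def)
qed

lemma RL_tail_less_if_chain_ends_at_first:
  assumes i_tail: "i \<in> {2..w}" and t: "RL a {1..w} i = t" and end_eq: "(un a w ^^ (t - 1)) i = 1"
  shows "RL a {2..w} i < t"
proof -
  from i_tail have i: "i \<in> {1..w}" by simp
  define c where "c k = (un a w ^^ k) i" for k
  have "RL a {2..w} p < s"
    if "p \<in> {2..w}" "RL a {1..w} p = s" "s \<le> t" "p \<le> c (t - s)" for p s
    using that
  proof (induction s arbitrary: p)
    case 0
    then show ?case using RL_pos[of "{1..w}" p a] by auto
  next
    case (Suc s)
    show ?case
    proof (rule ccontr)
      assume "\<not> RL a {2..w} p < Suc s"
      moreover have "RL a {2..w} p \<le> Suc s"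
        using RL_mono[of "{1..w}" "{2..w}" p a] Suc.prems(1,2) by auto
      ultimately have full: "RL a {2..w} p = Suc s" by simp
      have "s \<noteq> 0"
      proof
        assume "s = 0"
        with Suc.prems(1,4) end_eq show False by (simp add: c_def)
      qed
      with full have "2 \<le> RL a {2..w} p" by simp
      then obtain q where q: "q \<in> {2..w}" "q < p" "a q \<le> a p" "RL a {2..w} q + 1 = Suc s"
        using RL_predecessor[OF finite_atLeastAtMost Suc.prems(1)] full by metis
      have "RL a {1..w} q + 1 \<le> Suc s"
        using RL_Suc_le[of "{1..w}" q p a] q Suc.prems(1,2) by auto
      moreover have "s \<le> RL a {1..w} q"
        using RL_mono[of "{1..w}" "{2..w}" q a] q(1,4) by auto
      ultimately have q_level: "RL a {1..w} q = s" by simp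
      define k where "k = t - Suc s"
      have Suc_k: "Suc k < RL a {1..w} i" using \<open>s \<noteq> 0\<close> Suc.prems(3) t k_def by simp
      have "RL a {1..w} (c k) = Suc s"
        using un_iter[OF i Suc_lessD[OF Suc_k]] t k_def c_def Suc.prems(3) by simp
      then have "q \<le> c (Suc k)"
        using un_iter_Suc(3)[OF i Suc_k, of q] q(1,2) q_level Suc.prems(4) k_def c_def by auto
      moreover have "Suc k = t - s" using k_def Suc.prems(3) by simp
      ultimately have "RL a {2..w} q < s"
        using Suc.IH[OF _ q_level] q(1) Suc.prems(3) by simp
      with q(4) show False by simp
    qed
  qed
  from this[OF i_tail t] show ?thesis by (simp add: c_def)
qed

theorem theorem3:
  fixes a :: "nat \<Rightarrow> real" and w i t :: nat
  assumes "2 \<le> i" and "i \<le> w"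
    and "RL a {1..w} i = t"
  shows "((un a w ^^ (t - 1)) i = 1 \<longrightarrow> RL a {2..w} i = RL a {1..w} i - 1)
       \<and> ((un a w ^^ (t - 1)) i \<noteq> 1 \<longrightarrow> RL a {2..w} i = RL a {1..w} i)"
proof -
  have i: "i \<in> {1..w}" using assms(1,2) by simp
  have tail: "{2..w} = {1..w} - {1::nat}" by auto
  have upper: "RL a {2..w} i \<le> t"
    using RL_mono[of "{1..w}" "{2..w}" i a] assms by auto
  have lower: "t \<le> RL a {2..w} i + 1"
    using RL_le_RL_remove[of "{1..w}" i 1 a] assms unfolding tail by auto
  show ?thesis
  proof (intro conjI impI)
    assume "(un a w ^^ (t - 1)) i = 1"
    from RL_tail_less_if_chain_ends_at_first[OF _ assms(3) this]
    show "RL a {2..w} i = RL a {1..w} i - 1" using assms(1,2) lower assms(3) by simp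
  next
    assume "(un a w ^^ (t - 1)) i \<noteq> 1"
    from RL_tail_ge_if_chain_avoids_first[OF i assms(3) this]
    show "RL a {2..w} i = RL a {1..w} i" using upper assms(3) by linarith
  qed
qed

end
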